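(* Consider fair division instances with $n=2$ agents, $m$ divisible goods, additive valuations and generalized assignment constraints (sizes and budgets publicly known; agents report valuations). Let $\mathcal{M}$ be the mechanism that splits each good $g$ into two identical halves $g^{(1)},g^{(2)}$, forms $S_1=\{g^{(1)}:g\in[m]\}$ and $S_2=\{g^{(2)}:g\in[m]\}$, and for each agent $i\in\{1,2\}$ sets $x_i$ to be a maximum-valued (with respect to $i$'s reported valuation) feasible-for-$i$ fractional subset of $S_i$, the rest going to charity. Then $\mathcal{M}$ is truthful and always outputs an FEF allocation.
   Context: An allocation is $x=(x_1,x_2)$ with $x_i\in[0,1]^m$ and $x_{1,g}+x_{2,g}\le1$; the charity receives $x_{\mathrm{charity},g}=1-x_{1,g}-x_{2,g}$. Additive valuations: $v_i(y)=\sum_g y_g v_{i,g}$. Generalized assignment constraints: agent $i$ has sizes $s_i(g)\ge0$ and budget $B_i$; bundle $y$ is feasible for $i$ iff $\sum_g s_i(g)y_g\le B_i$. A feasible allocation is FEF if for all agents $i,j$, every $y\le x_j$ (componentwise) feasible for $i$ has $v_i(x_i)\ge v_i(y)$, and every $y\le x_{\mathrm{charity}}$ feasible for $i$ has $v_i(x_i)\ge v_i(y)$. A mechanism maps reported additive valuation profiles to feasible allocations; it is truthful if for every agent $i$ with true valuation $v_i$ and every profile of reports of the others, agent $i$'s true value for her bundle when reporting $v_i$ is at least her true value for her bundle under any misreport $v_i'$. *)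

theory Defs
  imports Complex_Main
begin

text \<open>Two agents, numbered 1 and 2; goods are 0..m-1. A (fractional) bundle is a function
  nat => real whose entries on goods g < m lie in [0,1]. Valuations, sizes and reports are
  functions nat => real indexed by goods; profiles are indexed by agents.\<close>

definition val :: "nat \<Rightarrow> (nat \<Rightarrow> real) \<Rightarrow> (nat \<Rightarrow> real) \<Rightarrow> real" where
  "val m v y = (\<Sum>g<m. y g * v g)"

definition is_bundle :: "nat \<Rightarrow> (nat \<Rightarrow> real) \<Rightarrow> bool" where
  "is_bundle m y \<longleftrightarrow> (\<forall>g<m. 0 \<le> y g \<and> y g \<le> 1)"

definition feasible_for :: "nat \<Rightarrow> (nat \<Rightarrow> real) \<Rightarrow> real \<Rightarrow> (nat \<Rightarrow> real) \<Rightarrow> bool" where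
  "feasible_for m s B y \<longleftrightarrow> is_bundle m y \<and> (\<Sum>g<m. s g * y g) \<le> B"

definition charity :: "(nat \<Rightarrow> nat \<Rightarrow> real) \<Rightarrow> nat \<Rightarrow> real" where
  "charity x g = 1 - x 1 g - x 2 g"

definition below :: "nat \<Rightarrow> (nat \<Rightarrow> real) \<Rightarrow> (nat \<Rightarrow> real) \<Rightarrow> bool" where
  "below m y z \<longleftrightarrow> (\<forall>g<m. y g \<le> z g)"

definition feasible_alloc ::
  "nat \<Rightarrow> (nat \<Rightarrow> nat \<Rightarrow> real) \<Rightarrow> (nat \<Rightarrow> real) \<Rightarrow> (nat \<Rightarrow> nat \<Rightarrow> real) \<Rightarrow> bool" where
  "feasible_alloc m s B x \<longleftrightarrow>
     (\<forall>i\<in>{1,2}. feasible_for m (s i) (B i) (x i)) \<and> (\<forall>g<m. x 1 g + x 2 g \<le> 1)"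

definition FEF ::
  "nat \<Rightarrow> (nat \<Rightarrow> nat \<Rightarrow> real) \<Rightarrow> (nat \<Rightarrow> real) \<Rightarrow> (nat \<Rightarrow> nat \<Rightarrow> real) \<Rightarrow> (nat \<Rightarrow> nat \<Rightarrow> real) \<Rightarrow> bool" where
  "FEF m s B v x \<longleftrightarrow> feasible_alloc m s B x \<and>
     (\<forall>i\<in>{1,2}. \<forall>j\<in>{1,2}. \<forall>y. feasible_for m (s i) (B i) y \<and> below m y (x j)
         \<longrightarrow> val m (v i) y \<le> val m (v i) (x i)) \<and>
     (\<forall>i\<in>{1,2}. \<forall>y. feasible_for m (s i) (B i) y \<and> below m y (charity x)
         \<longrightarrow> val m (v i) y \<le> val m (v i) (x i))"

definition valid_profile :: "nat \<Rightarrow> (nat \<Rightarrow> nat \<Rightarrow> real) \<Rightarrow> bool" where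
  "valid_profile m v \<longleftrightarrow> (\<forall>i\<in>{1,2}. \<forall>g<m. 0 \<le> v i g)"

text \<open>A fractional subset of S_i (the i-th halves) is a bundle with every entry at most 1/2.\<close>
definition half_bundle :: "nat \<Rightarrow> (nat \<Rightarrow> real) \<Rightarrow> bool" where
  "half_bundle m y \<longleftrightarrow> (\<forall>g<m. y g \<le> 1/2)"

definition halves_mechanism ::
  "nat \<Rightarrow> (nat \<Rightarrow> nat \<Rightarrow> real) \<Rightarrow> (nat \<Rightarrow> real) \<Rightarrow>
   ((nat \<Rightarrow> nat \<Rightarrow> real) \<Rightarrow> (nat \<Rightarrow> nat \<Rightarrow> real)) \<Rightarrow> bool" where
  "halves_mechanism m s B M \<longleftrightarrow>
     (\<forall>v. valid_profile m v \<longrightarrow> (\<forall>i\<in>{1,2}.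
        feasible_for m (s i) (B i) (M v i) \<and> half_bundle m (M v i) \<and>
        (\<forall>y. feasible_for m (s i) (B i) y \<and> half_bundle m y
             \<longrightarrow> val m (v i) y \<le> val m (v i) (M v i))))"

definition truthful ::
  "nat \<Rightarrow> ((nat \<Rightarrow> nat \<Rightarrow> real) \<Rightarrow> (nat \<Rightarrow> nat \<Rightarrow> real)) \<Rightarrow> bool" where
  "truthful m M \<longleftrightarrow>
     (\<forall>v v' i. valid_profile m v \<and> valid_profile m v' \<and> i \<in> {1,2} \<and>
        (\<forall>k. k \<noteq> i \<longrightarrow> v' k = v k)
        \<longrightarrow> val m (v i) (M v' i) \<le> val m (v i) (M v i))"

end

theory Submission
  imports Defs
begin

text \<open>Agent \<open>i\<close> receives a best feasible bundle among those bounded by \<open>1/2\<close> in every good, and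
  this candidate set does not depend on any report: a misreport only selects another candidate,
  which is worth no more under the true valuation. Every sub-bundle of the other agent's share is
  bounded by \<open>1/2\<close> too, so it is a candidate as well. Finally, if a feasible \<open>y\<close> fits into the
  charity's share, then \<open>y \<le> 1 - x\<^sub>i\<close>, so the midpoint of \<open>y\<close> and \<open>x\<^sub>i\<close> is a candidate (the
  budget constraint is convex) and \<open>(v\<^sub>i(y) + v\<^sub>i(x\<^sub>i))/2 \<le> v\<^sub>i(x\<^sub>i)\<close>.\<close>

definition half_optimal ::
  "nat \<Rightarrow> (nat \<Rightarrow> real) \<Rightarrow> real \<Rightarrow> (nat \<Rightarrow> real) \<Rightarrow> (nat \<Rightarrow> real) \<Rightarrow> bool" where
  "half_optimal m s B v x \<longleftrightarrow> feasible_for m s B x \<and> half_bundle m x \<and>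
     (\<forall>y. feasible_for m s B y \<and> half_bundle m y \<longrightarrow> val m v y \<le> val m v x)"

lemma halves_mechanism_iff_half_optimal:
  "halves_mechanism m s B M \<longleftrightarrow>
     (\<forall>v. valid_profile m v \<longrightarrow> (\<forall>i\<in>{1,2}. half_optimal m (s i) (B i) (v i) (M v i)))"
  unfolding halves_mechanism_def half_optimal_def by blast

lemma val_midpoint:
  "val m v (\<lambda>g. (y g + x g) / 2) = (val m v y + val m v x) / 2"
  unfolding val_def
  by (simp add: sum_divide_distrib[symmetric] sum.distrib[symmetric] algebra_simps)

lemma feasible_for_midpoint:
  assumes "feasible_for m s B y" and "feasible_for m s B x"
  shows "feasible_for m s B (\<lambda>g. (y g + x g) / 2)"
proof -
  have "(\<Sum>g<m. s g * ((y g + x g) / 2)) = ((\<Sum>g<m. s g * y g) + (\<Sum>g<m. s g * x g)) / 2"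
    by (simp add: sum_divide_distrib[symmetric] sum.distrib[symmetric] algebra_simps)
  moreover have "is_bundle m (\<lambda>g. (y g + x g) / 2)"
    unfolding is_bundle_def
  proof (intro allI impI)
    fix g
    assume "g < m"
    with assms have "0 \<le> y g" "y g \<le> 1" "0 \<le> x g" "x g \<le> 1"
      unfolding feasible_for_def is_bundle_def by auto
    then show "0 \<le> (y g + x g) / 2 \<and> (y g + x g) / 2 \<le> 1"
      by simp
  qed
  ultimately show ?thesis
    using assms unfolding feasible_for_def by simp
qed

lemma half_bundle_if_below:
  assumes "below m y z" and "half_bundle m z"
  shows "half_bundle m y"
  using assms unfolding below_def half_bundle_def by force

lemma half_bundle_midpoint_if_below_complement:
  assumes "below m y (\<lambda>g. 1 - x g)"
  shows "half_bundle m (\<lambda>g. (y g + x g) / 2)"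
  using assms unfolding below_def half_bundle_def by auto

lemma half_optimal_ge_below_half_bundle:
  assumes "half_optimal m s B v x" and "half_bundle m z"
    and "feasible_for m s B y" and "below m y z"
  shows "val m v y \<le> val m v x"
  using assms half_bundle_if_below unfolding half_optimal_def by blast

lemma half_optimal_ge_below_complement:
  assumes opt: "half_optimal m s B v x"
    and y: "feasible_for m s B y" "below m y (\<lambda>g. 1 - x g)"
  shows "val m v y \<le> val m v x"
proof -
  have "val m v (\<lambda>g. (y g + x g) / 2) \<le> val m v x"
    using opt y feasible_for_midpoint half_bundle_midpoint_if_below_complement
    unfolding half_optimal_def by blast
  then show ?thesis
    unfolding val_midpoint by simp
qed

lemma halves_mechanism_truthful:
  assumes "halves_mechanism m s B M"
  shows "truthful m M"
  unfolding truthful_def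
proof (intro allI impI)
  fix v v' i
  assume "valid_profile m v \<and> valid_profile m v' \<and> i \<in> {1,2} \<and> (\<forall>k. k \<noteq> i \<longrightarrow> v' k = v k)"
  then have "half_optimal m (s i) (B i) (v i) (M v i)"
    and "half_optimal m (s i) (B i) (v' i) (M v' i)"
    using assms unfolding halves_mechanism_iff_half_optimal by auto
  then show "val m (v i) (M v' i) \<le> val m (v i) (M v i)"
    unfolding half_optimal_def by blast
qed

lemma feasible_alloc_if_half_optimal:
  assumes "\<forall>i\<in>{1,2}. half_optimal m (s i) (B i) (v i) (x i)"
  shows "feasible_alloc m s B x"
proof -
  have "x 1 g + x 2 g \<le> 1" if "g < m" for g
    using assms that unfolding half_optimal_def half_bundle_def by force
  with assms show ?thesis
    unfolding feasible_alloc_def half_optimal_def by blast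
qed

lemma charity_below_complement:
  assumes "feasible_alloc m s B x" and "i \<in> {1,2}"
  shows "below m (charity x) (\<lambda>g. 1 - x i g)"
  using assms unfolding below_def charity_def feasible_alloc_def feasible_for_def is_bundle_def
  by force

lemma below_trans: "below m y z \<Longrightarrow> below m z w \<Longrightarrow> below m y w"
  unfolding below_def by force

lemma FEF_if_half_optimal:
  assumes opt: "\<forall>i\<in>{1,2}. half_optimal m (s i) (B i) (v i) (x i)"
  shows "FEF m s B v x"
proof -
  have alloc: "feasible_alloc m s B x"
    using opt by (rule feasible_alloc_if_half_optimal)
  have "val m (v i) y \<le> val m (v i) (x i)"
    if "i \<in> {1,2}" "j \<in> {1,2}" "feasible_for m (s i) (B i) y" "below m y (x j)" for i j y
    using opt that half_optimal_ge_below_half_bundle unfolding half_optimal_def by blast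
  moreover have "val m (v i) y \<le> val m (v i) (x i)"
    if "i \<in> {1,2}" "feasible_for m (s i) (B i) y" "below m y (charity x)" for i y
    using opt that half_optimal_ge_below_complement below_trans charity_below_complement[OF alloc]
    by blast
  ultimately show ?thesis
    using alloc unfolding FEF_def by blast
qed

theorem theorem5:
  fixes m :: nat
    and s :: "nat \<Rightarrow> nat \<Rightarrow> real"
    and B :: "nat \<Rightarrow> real"
    and M :: "(nat \<Rightarrow> nat \<Rightarrow> real) \<Rightarrow> (nat \<Rightarrow> nat \<Rightarrow> real)"
  assumes sizes: "\<forall>i\<in>{1,2}. \<forall>g<m. 0 \<le> s i g"
    and budgets: "\<forall>i\<in>{1,2}. 0 \<le> B i"
    and mech: "halves_mechanism m s B M"
  shows "truthful m M \<and> (\<forall>v. valid_profile m v \<longrightarrow> FEF m s B v (M v))"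
  using mech halves_mechanism_truthful FEF_if_half_optimal
  unfolding halves_mechanism_iff_half_optimal by blast

end
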